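(* Let $A\in\{\mathbb Z,\mathbb R\}$ and let $X\subset\mathbb R^d$ be a full-dimensional polytope. Then every convex body $K\subset\mathbb R^d$ which is $A$-$X$-free and inclusion-maximal among $A$-$X$-free convex bodies is a polytope.
   Context: A convex body in $\mathbb R^d$ is a nonempty compact convex subset of $\mathbb R^d$. An $A$-unimodular transformation is a map $T:\mathbb R^d\to\mathbb R^d$, $T(x)=Mx+b$ with $M\in \mathrm{GL}_d(\mathbb Z)$ and $b\in A^d$; an $A$-unimodular copy of $X\subset\mathbb R^d$ is a set $T(X)$ for such a $T$. A convex set $K\subset\mathbb R^d$ is called $A$-$X$-free if the relative interior of $K$ contains no $A$-unimodular copy of $X$ (by convention the relative interior of a single point is that point). *)

theory Defs
  imports "HOL-Analysis.Analysis"
begin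

definition GL_int :: "(real^'d^'d) set" where
  "GL_int = {M. (\<forall>i j. M $ i $ j \<in> \<int>) \<and> invertible M \<and>
                (\<forall>i j. matrix_inv M $ i $ j \<in> \<int>)}"

definition unimodular_copy :: "real set \<Rightarrow> (real^'d) set \<Rightarrow> (real^'d) set \<Rightarrow> bool" where
  "unimodular_copy A X Y \<longleftrightarrow>
     (\<exists>M b. M \<in> GL_int \<and> (\<forall>i. b $ i \<in> A) \<and> Y = (\<lambda>x. M *v x + b) ` X)"

definition convex_body :: "(real^'d) set \<Rightarrow> bool" where
  "convex_body K \<longleftrightarrow> K \<noteq> {} \<and> compact K \<and> convex K"

text \<open>K is A-X-free: rel_interior K contains no A-unimodular copy of X.
  (Isabelle's rel_interior of a singleton is the singleton itself.)\<close>
definition X_free :: "real set \<Rightarrow> (real^'d) set \<Rightarrow> (real^'d) set \<Rightarrow> bool" where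
  "X_free A X K \<longleftrightarrow> convex K \<and> \<not> (\<exists>Y. unimodular_copy A X Y \<and> Y \<subseteq> rel_interior K)"

definition maximal_X_free_body :: "real set \<Rightarrow> (real^'d) set \<Rightarrow> (real^'d) set \<Rightarrow> bool" where
  "maximal_X_free_body A X K \<longleftrightarrow> convex_body K \<and> X_free A X K \<and>
     (\<forall>L. convex_body L \<and> X_free A X L \<and> K \<subseteq> L \<longrightarrow> L = K)"

end

theory Submission
  imports Defs
begin

(* Let K be a maximal A-X-free convex body and P a box containing K. As X contains a ball, only
  finitely many M in GL_d(Z) map X into P by some x |-> M x + b, and for A = Z only finitely many
  copies of X lie in P at all. Every copy must leave the interior of K, so finitely many supporting
  halfspaces of K keep all copies inside P out of their common interior. For A = R and fixed M the
  translations form a continuum; there the halfspaces come from separating the nonpositive t-axis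
  from the convex hull of the compact set of pairs (a, t), a a unit vector and t >= h_K(a) - h_V(a),
  where V is the image under M of the vertices of X. Cutting P by these halfspaces gives a polytope
  L containing K that is still A-X-free, so L = K by maximality. *)

lemma finite_vectors_with_components_in:
  assumes "finite F"
  shows "finite {x::'a^'n. \<forall>i. x$i \<in> F}"
proof -
  have "{x::'a^'n. \<forall>i. x$i \<in> F} = vec_nth -` (PiE UNIV (\<lambda>_. F))"
    by auto
  moreover have "finite (vec_nth -` (PiE UNIV (\<lambda>_. F)) :: ('a^'n) set)"
    by (rule finite_vimageI) (auto simp: assms finite_PiE inj_on_def vec_eq_iff)
  ultimately show ?thesis
    by simp
qed

lemma supporting_halfspace_at_non_interior_point:
  fixes K :: "'a::euclidean_space set"
  assumes "convex K" "x \<notin> interior K"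
  obtains a where "norm a = 1" "K \<subseteq> {y. a \<bullet> y \<le> a \<bullet> x}"
proof -
  have "\<exists>a. a \<noteq> 0 \<and> K \<subseteq> {y. a \<bullet> y \<le> a \<bullet> x}"
  proof (cases "interior K = {}")
    case True
    then obtain a b where "a \<noteq> 0" "K \<subseteq> {y. a \<bullet> y = b}"
      using empty_interior_subset_hyperplane assms(1) by blast
    then show ?thesis
      by (intro exI[of _ "if b \<le> a \<bullet> x then a else -a"]) auto
  next
    case False
    then obtain a b where a: "a \<noteq> 0" "interior K \<subseteq> {y. a \<bullet> y \<le> b}" "b \<le> a \<bullet> x"
      using separating_hyperplane_sets[of "interior K" "{x}"] assms convex_interior by auto
    then have "closure (interior K) \<subseteq> {y. a \<bullet> y \<le> a \<bullet> x}"
      by (intro closure_minimal) (auto simp: closed_halfspace_le)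
    then show ?thesis
      using a(1) convex_closure_interior[OF assms(1) False] closure_subset by blast
  qed
  then obtain a where "a \<noteq> 0" "K \<subseteq> {y. a \<bullet> y \<le> a \<bullet> x}"
    by blast
  then show ?thesis
    using that[of "a /\<^sub>R norm a"] by (auto simp: divide_le_cancel)
qed

(* Cutting a box around K by these halfspaces keeps K and leaves no room in the interior for a
  member of the family. *)
definition blocking_halfspaces :: "'a::real_inner set \<Rightarrow> ('a \<times> real) set \<Rightarrow> 'a set set \<Rightarrow> bool" where
  "blocking_halfspaces K H \<Y> \<longleftrightarrow> finite H \<and> (\<forall>(a, t)\<in>H. a \<noteq> 0 \<and> K \<subseteq> {y. a \<bullet> y \<le> t}) \<and>
     (\<forall>Y\<in>\<Y>. \<not> Y \<subseteq> (\<Inter>(a, t)\<in>H. {y. a \<bullet> y < t}))"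

lemma blocking_halfspacesD:
  assumes "blocking_halfspaces K H \<Y>"
  shows "finite H" "(a, t) \<in> H \<Longrightarrow> a \<noteq> 0" "(a, t) \<in> H \<Longrightarrow> K \<subseteq> {y. a \<bullet> y \<le> t}"
    "Y \<in> \<Y> \<Longrightarrow> \<not> Y \<subseteq> (\<Inter>(a, t)\<in>H. {y. a \<bullet> y < t})"
  using assms by (auto simp: blocking_halfspaces_def)

lemma blocking_halfspaces_UN:
  assumes "finite I" "\<And>i. i \<in> I \<Longrightarrow> blocking_halfspaces K (H i) (\<Y> i)"
  shows "blocking_halfspaces K (\<Union>i\<in>I. H i) (\<Union>i\<in>I. \<Y> i)"
  unfolding blocking_halfspaces_def
proof (intro conjI)
  show "finite (\<Union>i\<in>I. H i)"
    using assms by (simp add: blocking_halfspaces_def)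
  show "\<forall>(a, t)\<in>(\<Union>i\<in>I. H i). a \<noteq> 0 \<and> K \<subseteq> {y. a \<bullet> y \<le> t}"
    using assms(2) by (force simp: blocking_halfspaces_def)
  show "\<forall>Y\<in>(\<Union>i\<in>I. \<Y> i). \<not> Y \<subseteq> (\<Inter>(a, t)\<in>(\<Union>i\<in>I. H i). {y. a \<bullet> y < t})"
  proof
    fix Y assume "Y \<in> (\<Union>i\<in>I. \<Y> i)"
    then obtain i where "i \<in> I" "Y \<in> \<Y> i"
      by blast
    then have "\<not> Y \<subseteq> (\<Inter>(a, t)\<in>H i. {y. a \<bullet> y < t})"
      using assms(2) by (simp add: blocking_halfspaces_def)
    moreover have "(\<Inter>(a, t)\<in>(\<Union>i\<in>I. H i). {y. a \<bullet> y < t}) \<subseteq> (\<Inter>(a, t)\<in>H i. {y. a \<bullet> y < t})"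
      using \<open>i \<in> I\<close> by (intro INF_superset_mono) auto
    ultimately show "\<not> Y \<subseteq> (\<Inter>(a, t)\<in>(\<Union>i\<in>I. H i). {y. a \<bullet> y < t})"
      by (meson subset_trans)
  qed
qed

lemma blocking_halfspaces_supersets:
  assumes "blocking_halfspaces K H \<Y>" "\<And>Z. Z \<in> \<Z> \<Longrightarrow> \<exists>Y\<in>\<Y>. Y \<subseteq> Z"
  shows "blocking_halfspaces K H \<Z>"
  using assms unfolding blocking_halfspaces_def by (meson subset_trans)

lemma blocking_halfspaces_finite_family:
  fixes K :: "'a::euclidean_space set"
  assumes "convex K" "finite \<Y>" "\<And>Y. Y \<in> \<Y> \<Longrightarrow> \<not> Y \<subseteq> interior K"
  shows "\<exists>H. blocking_halfspaces K H \<Y>"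
proof -
  have "\<exists>h. blocking_halfspaces K {h} {Y}" if Y: "Y \<in> \<Y>" for Y
  proof -
    obtain y where "y \<in> Y" "y \<notin> interior K"
      using assms(3)[OF Y] by blast
    then obtain a where "norm a = 1" "K \<subseteq> {z. a \<bullet> z \<le> a \<bullet> y}"
      using supporting_halfspace_at_non_interior_point assms(1) by blast
    then have "blocking_halfspaces K {(a, a \<bullet> y)} {Y}"
      using \<open>y \<in> Y\<close> by (auto simp: blocking_halfspaces_def)
    then show ?thesis ..
  qed
  then obtain h where "\<And>Y. Y \<in> \<Y> \<Longrightarrow> blocking_halfspaces K {h Y} {Y}"
    by metis
  then have "blocking_halfspaces K (\<Union>Y\<in>\<Y>. {h Y}) (\<Union>Y\<in>\<Y>. {Y})"
    by (intro blocking_halfspaces_UN assms(2))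
  then show ?thesis
    by (metis UN_singleton)
qed

lemma separation_from_nonpositive_axis:
  fixes E :: "('a::euclidean_space \<times> real) set"
  assumes "compact E" "E \<noteq> {}" "\<forall>r\<ge>0. (0, -r) \<notin> convex hull E"
  obtains u s where "s \<le> 0" "\<And>a t. (a, t) \<in> E \<Longrightarrow> u \<bullet> a + s * t < 0"
proof -
  define N :: "('a \<times> real) set" where "N = {0} \<times> {..0}"
  have "(0, - (- t)) \<notin> convex hull E" if "t \<le> 0" for t
    using assms(3) that by (metis neg_0_le_iff_le)
  then have "convex hull E \<inter> N = {}"
    by (auto simp: N_def)
  moreover have "convex hull E \<noteq> {}" "convex N" "closed N"
    using assms(2) by (auto simp: N_def intro: convex_Times closed_Times)
  ultimately obtain u s \<beta> where
      sep: "\<forall>x\<in>convex hull E. (u, s) \<bullet> x < \<beta>" "\<forall>x\<in>N. \<beta> < (u, s) \<bullet> x"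
    using separating_hyperplane_compact_closed[OF convex_convex_hull compact_convex_hull[OF assms(1)]]
    by (metis surj_pair)
  have "\<beta> < 0"
    using sep(2)[rule_format, of "(0, 0)"] by (simp add: N_def)
  have "s \<le> 0"
  proof (rule ccontr)
    assume "\<not> s \<le> 0"
    then have "(0, \<beta> / s) \<in> N"
      using \<open>\<beta> < 0\<close> by (simp add: N_def divide_nonpos_pos)
    then show False
      using sep(2) \<open>\<not> s \<le> 0\<close> by force
  qed
  moreover have "u \<bullet> a + s * t < 0" if "(a, t) \<in> E" for a t
    using sep(1) hull_inc[OF that] \<open>\<beta> < 0\<close> by force
  ultimately show ?thesis
    using that by blast
qed

lemma nonpositive_axis_meets_convex_hull:
  fixes E :: "('a::euclidean_space \<times> real) set"
  assumes "compact E"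
    and units: "\<And>a. norm a = 1 \<Longrightarrow> \<exists>t. (a, t) \<in> E"
    and nonneg: "\<And>u s. s < 0 \<Longrightarrow> \<exists>(a, t)\<in>E. 0 \<le> u \<bullet> a + s * t"
  shows "\<exists>r\<ge>0. (0, -r) \<in> convex hull E"
proof (rule ccontr)
  obtain a0 :: 'a where a0: "norm a0 = 1"
    using norm_Basis[OF SOME_Basis] by blast
  then obtain t t' where E: "(a0, t) \<in> E" "(-a0, t') \<in> E"
    using units by (metis norm_minus_cancel)
  assume "\<not> ?thesis"
  then have "\<forall>r\<ge>0. (0, -r) \<notin> convex hull E"
    by blast
  moreover have "E \<noteq> {}"
    using E(1) by blast
  ultimately obtain u s where "s \<le> 0" and neg: "\<And>a t. (a, t) \<in> E \<Longrightarrow> u \<bullet> a + s * t < 0"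
    using separation_from_nonpositive_axis[OF assms(1)] by metis
  show False
  proof (cases "s = 0")
    case True
    then show False
      using neg[OF E(1)] neg[OF E(2)] by simp
  next
    case False
    then show False
      using nonneg[of s u] neg \<open>s \<le> 0\<close> by fastforce
  qed
qed

(* The pairs (a, t) with a a unit vector and t >= h_K(a) - h_V(a), where h denotes the support
  function; the cap T makes the set compact. *)
definition gap_epigraph :: "'a::real_inner set \<Rightarrow> 'a set \<Rightarrow> real \<Rightarrow> ('a \<times> real) set" where
  "gap_epigraph K V T = {(a, t). norm a = 1 \<and> t \<le> T \<and> (\<forall>y\<in>K. \<exists>v\<in>V. a \<bullet> (y - v) \<le> t)}"

lemma in_gap_epigraph_min:
  assumes "norm a = 1" "\<forall>y\<in>K. \<exists>v\<in>V. a \<bullet> (y - v) \<le> t"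
    and T: "\<And>y v. y \<in> K \<Longrightarrow> v \<in> V \<Longrightarrow> norm (y - v) \<le> T"
  shows "(a, min t T) \<in> gap_epigraph K V T"
proof -
  have "a \<bullet> (y - v) \<le> T" if "y \<in> K" "v \<in> V" for y v
    using norm_cauchy_schwarz[of a "y - v"] T[OF that] assms(1) by simp
  then show ?thesis
    using assms(1,2) by (fastforce simp: gap_epigraph_def min_def)
qed

lemma compact_gap_epigraph:
  fixes K V :: "'a::euclidean_space set"
  assumes "finite V" "K \<noteq> {}"
    and T: "\<And>y v. y \<in> K \<Longrightarrow> v \<in> V \<Longrightarrow> norm (y - v) \<le> T"
  shows "compact (gap_epigraph K V T)"
proof -
  have eq: "gap_epigraph K V T = ({p. norm (fst p) = 1} \<inter> {p. snd p \<le> T}) \<inter>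
      (\<Inter>y\<in>K. \<Union>v\<in>V. {p. fst p \<bullet> (y - v) \<le> snd p})"
    by (auto simp: gap_epigraph_def)
  have "closed (gap_epigraph K V T)"
    unfolding eq by (intro closed_Int closed_INT ballI closed_UN assms(1) closed_Collect_le
        closed_Collect_eq continuous_intros)
  moreover have "gap_epigraph K V T \<subseteq> sphere 0 1 \<times> {-T..T}"
  proof safe
    fix a t assume p: "(a, t) \<in> gap_epigraph K V T"
    obtain y where "y \<in> K"
      using assms(2) by blast
    then obtain v where "v \<in> V" "a \<bullet> (y - v) \<le> t"
      using p by (auto simp: gap_epigraph_def)
    moreover have "- norm (y - v) \<le> a \<bullet> (y - v)"
      using norm_cauchy_schwarz[of "-a" "y - v"] p by (simp add: gap_epigraph_def)
    ultimately show "t \<in> {-T..T}"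
      using T[OF \<open>y \<in> K\<close>] p by (force simp: gap_epigraph_def)
  qed (auto simp: gap_epigraph_def)
  ultimately show ?thesis
    by (metis compact_Icc compact_Times compact_sphere compact_Int_closed inf.absorb_iff2)
qed

lemma gap_epigraph_certificate:
  fixes K V :: "'a::euclidean_space set"
  assumes "convex K" "K \<noteq> {}" "finite V"
    and T: "\<And>y v. y \<in> K \<Longrightarrow> v \<in> V \<Longrightarrow> norm (y - v) \<le> T"
    and free: "\<And>b. \<not> (\<lambda>v. v + b) ` V \<subseteq> interior K"
  shows "\<exists>r\<ge>0. (0, -r) \<in> convex hull gap_epigraph K V T"
proof (rule nonpositive_axis_meets_convex_hull)
  show "compact (gap_epigraph K V T)"
    by (rule compact_gap_epigraph[OF assms(3,2) T])
  fix a :: 'a assume "norm a = 1"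
  moreover obtain v where "v \<in> V"
    using free[of 0] by auto
  then have "\<forall>y\<in>K. \<exists>v\<in>V. a \<bullet> (y - v) \<le> T"
    using norm_cauchy_schwarz[of a] T \<open>norm a = 1\<close> by (metis mult_1 order.trans)
  ultimately show "\<exists>t. (a, t) \<in> gap_epigraph K V T"
    using in_gap_epigraph_min[OF _ _ T] by blast
next
  fix u :: 'a and s :: real assume "s < 0"
  \<comment> \<open>chosen so that s * (a \<bullet> b) = - (u \<bullet> a) for every a\<close>
  define b where "b = (-1 / s) *\<^sub>R u"
  obtain v where "v \<in> V" "v + b \<notin> interior K"
    using free[of b] by blast
  then obtain a where a: "norm a = 1" "K \<subseteq> {y. a \<bullet> y \<le> a \<bullet> (v + b)}"
    using supporting_halfspace_at_non_interior_point assms(1) by blast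
  have "a \<bullet> (y - v) \<le> a \<bullet> b" if "y \<in> K" for y
    using a(2) that by (auto simp: inner_diff_right inner_add_right)
  then have "(a, min (a \<bullet> b) T) \<in> gap_epigraph K V T"
    using in_gap_epigraph_min[OF a(1) _ T] \<open>v \<in> V\<close> by blast
  moreover have "0 \<le> u \<bullet> a + s * min (a \<bullet> b) T"
    using \<open>s < 0\<close> mult_left_mono_neg[of "min (a \<bullet> b) T" "a \<bullet> b" s]
    by (simp add: b_def inner_commute)
  ultimately show "\<exists>(a, t)\<in>gap_epigraph K V T. 0 \<le> u \<bullet> a + s * t"
    by blast
qed

lemma blocking_halfspaces_translates:
  fixes K V :: "'a::euclidean_space set"
  assumes "compact K" "convex K" "K \<noteq> {}" "finite V"
    and free: "\<And>b. \<not> (\<lambda>v. v + b) ` V \<subseteq> interior K"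
  shows "\<exists>H. blocking_halfspaces K H (range (\<lambda>b. (\<lambda>v. v + b) ` V))"
proof -
  obtain R where R: "\<And>z. z \<in> K \<union> V \<Longrightarrow> norm z \<le> R"
    using assms by (meson bounded_Un bounded_iff compact_imp_bounded finite_imp_bounded)
  have T: "norm (y - v) \<le> 2 * R" if "y \<in> K" "v \<in> V" for y v
    using norm_triangle_ineq4[of y v] R[of y] R[of v] that by simp
  obtain r where "r \<ge> 0" "(0, -r) \<in> convex hull gap_epigraph K V (2 * R)"
    using gap_epigraph_certificate[OF assms(2-4) T free] by blast
  then obtain S where S: "finite S" "S \<subseteq> gap_epigraph K V (2 * R)" "(0, -r) \<in> convex hull S"
    using caratheodory_aff_dim[of "gap_epigraph K V (2 * R)"] by blast
  have "\<exists>y\<in>K. \<forall>z\<in>K. a \<bullet> z \<le> a \<bullet> y" for a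
    by (rule continuous_attains_sup[OF assms(1,3)]) (intro continuous_intros)
  then obtain ymax where ymax: "\<And>a. ymax a \<in> K" "\<And>a y. y \<in> K \<Longrightarrow> a \<bullet> y \<le> a \<bullet> ymax a"
    by metis
  define H where "H = (\<lambda>(a, t). (a, a \<bullet> ymax a)) ` S"
  have "\<not> (\<lambda>v. v + b) ` V \<subseteq> (\<Inter>(a, t)\<in>H. {y. a \<bullet> y < t})" for b
  proof
    assume inside: "(\<lambda>v. v + b) ` V \<subseteq> (\<Inter>(a, t)\<in>H. {y. a \<bullet> y < t})"
    have "a \<bullet> b < t" if p: "(a, t) \<in> S" for a t
    proof -
      obtain v where "v \<in> V" "a \<bullet> (ymax a - v) \<le> t"
        using S(2) p ymax(1) by (force simp: gap_epigraph_def)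
      moreover have "a \<bullet> (v + b) < a \<bullet> ymax a"
        using inside \<open>v \<in> V\<close> p by (force simp: H_def)
      ultimately show ?thesis
        by (simp add: inner_diff_right inner_add_right)
    qed
    then have "convex hull S \<subseteq> {p. 0 < (-b, 1) \<bullet> p}"
      by (intro hull_minimal convex_halfspace_gt) (auto simp: inner_commute)
    then show False
      using S(3) \<open>r \<ge> 0\<close> by auto
  qed
  moreover have "finite H" "\<forall>(a, t)\<in>H. a \<noteq> 0 \<and> K \<subseteq> {y. a \<bullet> y \<le> t}"
    using S(1,2) ymax(2) by (fastforce simp: H_def gap_epigraph_def)+
  ultimately show ?thesis
    unfolding blocking_halfspaces_def by blast
qed

lemma matrix_entry_bound_of_bounded_affine_image:
  fixes M :: "real^'n^'m"
  assumes "r > 0" "ball c r \<subseteq> X" and B: "\<And>x. x \<in> X \<Longrightarrow> norm (M *v x + b) \<le> B"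
  shows "\<bar>M $ i $ j\<bar> \<le> 4 * B / r"
proof -
  define e :: "real^'n" where "e = axis j 1"
  have "c \<in> X" "c + (r / 2) *\<^sub>R e \<in> X"
    using assms(1,2) by (auto simp: e_def dist_norm)
  then have "norm ((M *v (c + (r / 2) *\<^sub>R e) + b) - (M *v c + b)) \<le> 2 * B"
    using B norm_triangle_ineq4 by (smt (verit))
  then have "(r / 2) * norm (M *v e) \<le> 2 * B"
    using assms(1) by (simp add: matrix_vector_right_distrib matrix_vector_mult_scaleR)
  moreover have "\<bar>M $ i $ j\<bar> \<le> norm (M *v e)"
    using component_le_norm_cart[of "M *v e" i]
    by (simp add: e_def matrix_vector_mult_basis column_def)
  ultimately have "(r / 2) * \<bar>M $ i $ j\<bar> \<le> 2 * B"
    using mult_left_mono[of "\<bar>M $ i $ j\<bar>" "norm (M *v e)" "r / 2"] assms(1) by linarith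
  then show ?thesis
    using assms(1) by (simp add: field_simps)
qed

lemma finite_GL_int_images_within_bounded:
  fixes X P :: "(real^'d) set"
  assumes "interior X \<noteq> {}" "bounded P"
  shows "finite {M \<in> GL_int. \<exists>b. (\<lambda>x. M *v x + b) ` X \<subseteq> P}"
proof -
  obtain c r where r: "r > 0" "ball c r \<subseteq> X"
    using assms(1) by (metis all_not_in_conv mem_interior)
  obtain B where B: "\<And>x. x \<in> P \<Longrightarrow> norm x \<le> B"
    using assms(2) by (auto simp: bounded_iff)
  let ?F = "{k \<in> \<int>. \<bar>k\<bar> \<le> 4 * B / r}"
  have "{M \<in> GL_int. \<exists>b. (\<lambda>x. M *v x + b) ` X \<subseteq> P} \<subseteq> {M. \<forall>i. M $ i \<in> {x. \<forall>j. x $ j \<in> ?F}}"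
  proof safe
    fix M b i j assume M: "M \<in> GL_int" and MX: "(\<lambda>x. M *v x + b) ` X \<subseteq> P"
    show "M $ i $ j \<in> \<int>"
      using M by (simp add: GL_int_def)
    show "\<bar>M $ i $ j\<bar> \<le> 4 * B / r"
      using MX B by (intro matrix_entry_bound_of_bounded_affine_image[OF r]) blast
  qed
  then show ?thesis
    by (rule finite_subset) (intro finite_vectors_with_components_in finite_abs_int_segment)
qed

lemma finite_integral_copies_within_bounded:
  fixes X P :: "(real^'d) set"
  assumes "interior X \<noteq> {}" "bounded P"
  shows "finite {Y. unimodular_copy \<int> X Y \<and> Y \<subseteq> P}"
proof -
  let ?FM = "{M \<in> GL_int. \<exists>b. (\<lambda>x. M *v x + b) ` X \<subseteq> P}"
  obtain c where c: "c \<in> X"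
    using assms(1) interior_subset by blast
  obtain B where B: "\<And>x. x \<in> P \<Longrightarrow> norm x \<le> B"
    using assms(2) by (auto simp: bounded_iff)
  let ?Fb = "\<lambda>M. {b. \<forall>i. b $ i \<in> {k \<in> \<int>. \<bar>k\<bar> \<le> B + norm (M *v c)}}"
  have "\<bar>b $ i\<bar> \<le> B + norm (M *v c)" if "(\<lambda>x. M *v x + b) ` X \<subseteq> P" for M b i
  proof -
    have "\<bar>b $ i\<bar> \<le> norm ((M *v c + b) - M *v c)"
      by (simp add: component_le_norm_cart)
    also have "\<dots> \<le> norm (M *v c + b) + norm (M *v c)"
      by (rule norm_triangle_ineq4)
    finally show ?thesis
      using B that c by force
  qed
  then have "{Y. unimodular_copy \<int> X Y \<and> Y \<subseteq> P} \<subseteq> (\<lambda>(M, b). (\<lambda>x. M *v x + b) ` X) ` Sigma ?FM ?Fb"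
    by (fastforce simp: unimodular_copy_def intro: rev_image_eqI)
  moreover have "finite (Sigma ?FM ?Fb)"
    using finite_GL_int_images_within_bounded[OF assms]
    by (intro finite_SigmaI finite_vectors_with_components_in finite_abs_int_segment)
  ultimately show ?thesis
    using finite_subset by blast
qed

lemma X_free_imp_copy_not_in_interior:
  assumes "X_free A X K" "unimodular_copy A X Y"
  shows "\<not> Y \<subseteq> interior K"
  using assms interior_subset_rel_interior unfolding X_free_def by (meson order_trans)

lemma aff_dim_unimodular_copy:
  assumes "unimodular_copy A X Y"
  shows "aff_dim Y = aff_dim X"
proof -
  obtain M b where M: "invertible M" and Y: "Y = (+) b ` ((\<lambda>x. M *v x) ` X)"
    using assms by (auto simp: unimodular_copy_def GL_int_def image_image add.commute)
  show ?thesis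
    unfolding Y aff_dim_translation_eq
    using inj_matrix_vector_mult[OF M] by (intro aff_dim_injective_linear_image) auto
qed

lemma affine_image_convex_hull:
  assumes "linear f"
  shows "(\<lambda>x. f x + b) ` (convex hull S) = convex hull ((\<lambda>x. f x + b) ` S)"
proof -
  have eq: "(\<lambda>x. f x + b) ` T = (\<lambda>x. b + x) ` f ` T" for T
    by (auto simp: add.commute)
  show ?thesis
    unfolding eq convex_hull_translation convex_hull_linear_image[OF assms] ..
qed

lemma X_free_Int_blocking_halfspaces:
  fixes X P :: "(real^'d) set"
  assumes X: "aff_dim X = int CARD('d)" and "convex P"
    and H: "blocking_halfspaces K H {Y. unimodular_copy A X Y \<and> Y \<subseteq> P}"
  shows "X_free A X (P \<inter> (\<Inter>(a, t)\<in>H. {y. a \<bullet> y \<le> t}))" (is "X_free A X ?L")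
  unfolding X_free_def
proof (intro conjI notI)
  show "convex ?L"
    using assms(2) by (intro convex_Int convex_INT) (auto simp: convex_halfspace_le split: prod.split)
  assume "\<exists>Y. unimodular_copy A X Y \<and> Y \<subseteq> rel_interior ?L"
  then obtain Y where Y: "unimodular_copy A X Y" "Y \<subseteq> rel_interior ?L"
    by blast
  then have "Y \<subseteq> ?L"
    using rel_interior_subset by blast
  then have "aff_dim ?L = int CARD('d)"
    using aff_dim_subset[of Y ?L] aff_dim_unimodular_copy[OF Y(1)] X aff_dim_le_DIM[of ?L] by simp
  then have "Y \<subseteq> interior ?L"
    using Y(2) by (simp add: interior_rel_interior_gen)
  moreover have "interior ?L \<subseteq> {y. a \<bullet> y < t}" if "(a, t) \<in> H" for a t
  proof -
    have "?L \<subseteq> {y. a \<bullet> y \<le> t}"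
      using that by blast
    then have "interior ?L \<subseteq> interior {y. a \<bullet> y \<le> t}"
      by (rule interior_mono)
    then show ?thesis
      using blocking_halfspacesD(2)[OF H that] by simp
  qed
  ultimately have "Y \<subseteq> (\<Inter>(a, t)\<in>H. {y. a \<bullet> y < t})"
    by blast
  moreover have "Y \<subseteq> P"
    using \<open>Y \<subseteq> ?L\<close> by blast
  ultimately show False
    using blocking_halfspacesD(4)[OF H] Y(1) by blast
qed

lemma maximal_X_free_body_polytope_if_blocked:
  fixes X K P :: "(real^'d) set"
  assumes max: "maximal_X_free_body A X K" and X: "aff_dim X = int CARD('d)"
    and P: "polytope P" "K \<subseteq> P"
    and H: "blocking_halfspaces K H {Y. unimodular_copy A X Y \<and> Y \<subseteq> P}"
  shows "polytope K"
proof -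
  define L where "L = P \<inter> (\<Inter>(a, t)\<in>H. {y. a \<bullet> y \<le> t})"
  have "polytope L"
    unfolding L_def using blocking_halfspacesD(1)[OF H]
    by (intro polytope_Int_polyhedron P(1) polyhedron_Inter) (auto simp: polyhedron_halfspace_le)
  have "K \<subseteq> L"
    using P(2) blocking_halfspacesD(3)[OF H] by (auto simp: L_def)
  then have "convex_body L"
    using \<open>polytope L\<close> max
    by (auto simp: convex_body_def maximal_X_free_body_def polytope_imp_compact polytope_imp_convex)
  moreover have "X_free A X L"
    unfolding L_def using X polytope_imp_convex[OF P(1)] H by (rule X_free_Int_blocking_halfspaces)
  ultimately have "L = K"
    using max \<open>K \<subseteq> L\<close> by (simp add: maximal_X_free_body_def)
  then show ?thesis
    using \<open>polytope L\<close> by simp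
qed

lemma blocking_halfspaces_linear_image_translates:
  fixes S K :: "(real^'d) set"
  assumes "finite S" "convex_body K" "X_free UNIV (convex hull S) K" "M \<in> GL_int"
  shows "\<exists>H. blocking_halfspaces K H (range (\<lambda>b. (\<lambda>v. v + b) ` (\<lambda>x. M *v x) ` S))"
proof (rule blocking_halfspaces_translates)
  show K: "compact K" "convex K" "K \<noteq> {}"
    using assms(2) by (auto simp: convex_body_def)
  show "finite ((\<lambda>x. M *v x) ` S)"
    using assms(1) by simp
  fix b
  show "\<not> (\<lambda>v. v + b) ` (\<lambda>x. M *v x) ` S \<subseteq> interior K"
  proof
    assume "(\<lambda>v. v + b) ` (\<lambda>x. M *v x) ` S \<subseteq> interior K"
    then have "convex hull ((\<lambda>x. M *v x + b) ` S) \<subseteq> interior K"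
      by (intro hull_minimal) (auto simp: convex_interior K(2))
    then have "(\<lambda>x. M *v x + b) ` (convex hull S) \<subseteq> interior K"
      using affine_image_convex_hull[OF matrix_vector_mul_linear, of M b S] by simp
    moreover have "unimodular_copy UNIV (convex hull S) ((\<lambda>x. M *v x + b) ` (convex hull S))"
      using assms(4) by (auto simp: unimodular_copy_def)
    ultimately show False
      using X_free_imp_copy_not_in_interior[OF assms(3)] by blast
  qed
qed

lemma blocking_halfspaces_real_copies:
  fixes X K P :: "(real^'d) set"
  assumes "polytope X" "interior X \<noteq> {}" "bounded P" "convex_body K" "X_free UNIV X K"
  shows "\<exists>H. blocking_halfspaces K H {Y. unimodular_copy UNIV X Y \<and> Y \<subseteq> P}"
proof -
  obtain S where S: "finite S" "X = convex hull S"
    using assms(1) by (auto simp: polytope_def)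
  define FM where "FM = {M \<in> GL_int. \<exists>b. (\<lambda>x. M *v x + b) ` X \<subseteq> P}"
  define \<T> where "\<T> M = range (\<lambda>b. (\<lambda>v. v + b) ` (\<lambda>x. M *v x) ` S)" for M :: "real^'d^'d"
  have "\<forall>M\<in>FM. \<exists>H. blocking_halfspaces K H (\<T> M)"
    using blocking_halfspaces_linear_image_translates[OF S(1) assms(4)] assms(5)
    by (simp add: FM_def \<T>_def S(2))
  then obtain HM where "\<forall>M\<in>FM. blocking_halfspaces K (HM M) (\<T> M)"
    by (rule bchoice[THEN exE])
  then have UN: "blocking_halfspaces K (\<Union>M\<in>FM. HM M) (\<Union>M\<in>FM. \<T> M)"
    using finite_GL_int_images_within_bounded[OF assms(2,3)]
    by (intro blocking_halfspaces_UN) (simp_all add: FM_def)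
  have cover: "\<exists>T\<in>(\<Union>M\<in>FM. \<T> M). T \<subseteq> Y" if Y: "unimodular_copy UNIV X Y" "Y \<subseteq> P" for Y
  proof -
    obtain M b where "M \<in> GL_int" and Y_eq: "Y = (\<lambda>x. M *v x + b) ` X"
      using Y(1) by (auto simp: unimodular_copy_def)
    then have "M \<in> FM"
      using Y(2) by (auto simp: FM_def)
    moreover have "(\<lambda>v. v + b) ` (\<lambda>x. M *v x) ` S \<subseteq> Y"
      using S(2) hull_subset[of S convex] by (auto simp: Y_eq)
    ultimately show ?thesis
      by (auto simp: \<T>_def)
  qed
  have "blocking_halfspaces K (\<Union>M\<in>FM. HM M) {Y. unimodular_copy UNIV X Y \<and> Y \<subseteq> P}"
    by (rule blocking_halfspaces_supersets[OF UN]) (use cover in simp)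
  then show ?thesis ..
qed

lemma blocking_halfspaces_integral_copies:
  fixes X K P :: "(real^'d) set"
  assumes "interior X \<noteq> {}" "bounded P" "convex_body K" "X_free \<int> X K"
  shows "\<exists>H. blocking_halfspaces K H {Y. unimodular_copy \<int> X Y \<and> Y \<subseteq> P}"
proof (rule blocking_halfspaces_finite_family)
  show "convex K"
    using assms(3) by (simp add: convex_body_def)
  show "finite {Y. unimodular_copy \<int> X Y \<and> Y \<subseteq> P}"
    using assms(1,2) by (rule finite_integral_copies_within_bounded)
  show "\<And>Y. Y \<in> {Y. unimodular_copy \<int> X Y \<and> Y \<subseteq> P} \<Longrightarrow> \<not> Y \<subseteq> interior K"
    using X_free_imp_copy_not_in_interior[OF assms(4)] by blast
qed

theorem theorem1p2:
  fixes A :: "real set" and X K :: "(real^'d) set"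
  assumes "A = \<int> \<or> A = UNIV"
    and "polytope X" and "aff_dim X = int CARD('d)"
    and "maximal_X_free_body A X K"
  shows "polytope K"
proof -
  have K: "convex_body K" "X_free A X K"
    using assms(4) by (auto simp: maximal_X_free_body_def)
  have "interior X \<noteq> {}"
    using assms(2,3) polytope_imp_convex
    by (force simp: interior_rel_interior_gen rel_interior_eq_empty)
  obtain c where "K \<subseteq> cbox (-c) c"
    using K(1) by (meson bounded_subset_cbox_symmetric compact_imp_bounded convex_body_def)
  moreover have "\<exists>H. blocking_halfspaces K H {Y. unimodular_copy A X Y \<and> Y \<subseteq> cbox (-c) c}"
    using assms(1)
  proof
    assume "A = \<int>"
    then show ?thesis
      using blocking_halfspaces_integral_copies[OF \<open>interior X \<noteq> {}\<close> bounded_cbox K(1)] K(2) by simp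
  next
    assume "A = UNIV"
    then show ?thesis
      using blocking_halfspaces_real_copies[OF assms(2) \<open>interior X \<noteq> {}\<close> bounded_cbox K(1)] K(2)
      by simp
  qed
  ultimately show ?thesis
    using maximal_X_free_body_polytope_if_blocked[OF assms(4,3) polytope_interval] by blast
qed

end
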